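(* Let $p$ be an even integer, $q\ge1$, $W\ge q$, and $a=1-1/W$. Consider the following random $p\times q$ matrix $A$: for each $i\in[p/2]$ choose $j\in[q]$ uniformly at random and set $A_{i+p/2}=A_i=ae_j+b(\mathbf{1}_q-e_j)$, where $b\ge 0$ is chosen so that $\|A_i\|_2=1$ (a YES instance). With probability $1/2$, transform $A$ into a NO instance: choose $i^*\in[p/2]$ uniformly at random and, if $A_{i^*}=ae_{j^*}+b(\mathbf{1}_q-e_{j^*})$, set $A_{i^*+p/2}=-ae_{j^*}+b(\mathbf{1}_q-e_{j^*})$. If a deterministic algorithm reads at most $s$ positions of $A$ and distinguishes YES and NO instances with probability at least $2/3$ (over this distribution), then $s=\Omega(pq)$.
   Context: $e_j$ is the $j$-th standard unit vector in $\mathbb{R}^q$, $\mathbf{1}_q$ the all-ones vector. *)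

theory Defs
  imports Complex_Main "HOL-Library.FuncSet"
begin

text \<open>Matrices are functions nat => nat => real; row i, column k (0-indexed).
  A p x q matrix has rows 0..<p and columns 0..<q; entries outside are 0.\<close>

text \<open>Deterministic (adaptive) query algorithms = decision trees: at each inner node
  the algorithm reads position (i,k) of the matrix and branches on the value read;
  a leaf outputs True (= YES) or False (= NO).\<close>
datatype qtree = Leaf bool | Query nat nat "real \<Rightarrow> qtree"

primrec run :: "qtree \<Rightarrow> (nat \<Rightarrow> nat \<Rightarrow> real) \<Rightarrow> bool" where
  "run (Leaf b) A = b"
| "run (Query i k f) A = run (f (A i k)) A"

primrec queried :: "qtree \<Rightarrow> (nat \<Rightarrow> nat \<Rightarrow> real) \<Rightarrow> (nat \<times> nat) set" where
  "queried (Leaf b) A = {}"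
| "queried (Query i k f) A = insert (i, k) (queried (f (A i k)) A)"

definition coef_a :: "real \<Rightarrow> real" where
  "coef_a W = 1 - 1 / W"

text \<open>b >= 0 with a^2 + (q-1) b^2 = 1, i.e. the row a e_j + b(1_q - e_j) has unit norm.\<close>
definition coef_b :: "nat \<Rightarrow> real \<Rightarrow> real" where
  "coef_b q W = sqrt ((1 - (coef_a W)\<^sup>2) / (real q - 1))"

definition row_vec :: "nat \<Rightarrow> real \<Rightarrow> nat \<Rightarrow> nat \<Rightarrow> real" where
  "row_vec q W j k = (if k < q then (if k = j then coef_a W else coef_b q W) else 0)"

text \<open>Index choices J : [p/2] -> [q], with m = p/2.\<close>
definition choices :: "nat \<Rightarrow> nat \<Rightarrow> (nat \<Rightarrow> nat) set" where
  "choices m q = PiE {0..<m} (\<lambda>_. {0..<q})"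

text \<open>YES instance: rows i and i+m both equal a e_{J i} + b(1 - e_{J i}).\<close>
definition yes_mat :: "nat \<Rightarrow> nat \<Rightarrow> real \<Rightarrow> (nat \<Rightarrow> nat) \<Rightarrow> nat \<Rightarrow> nat \<Rightarrow> real" where
  "yes_mat m q W J i k = (if i < 2 * m then row_vec q W (J (i mod m)) k else 0)"

definition no_mat :: "nat \<Rightarrow> nat \<Rightarrow> real \<Rightarrow> (nat \<Rightarrow> nat) \<Rightarrow> nat \<Rightarrow> nat \<Rightarrow> nat \<Rightarrow> real" where
  "no_mat m q W J i0 i k =
     (if i = i0 + m \<and> k = J i0 \<and> k < q then - coef_a W else yes_mat m q W J i k)"

text \<open>Probability (over the hard distribution, YES/NO each with probability 1/2,
  J uniform, i0 uniform and independent) that the algorithm answers correctly.\<close>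
definition success_prob :: "qtree \<Rightarrow> nat \<Rightarrow> nat \<Rightarrow> real \<Rightarrow> real" where
  "success_prob T m q W =
     1/2 * (real (card {J \<in> choices m q. run T (yes_mat m q W J)}) / real (card (choices m q)))
   + 1/2 * (real (card {(J, i0) \<in> choices m q \<times> {0..<m}. \<not> run T (no_mat m q W J i0)})
            / real (card (choices m q \<times> {0..<m})))"

end

theory Submission
  imports Defs
begin

text \<open>A NO instance differs from the YES instance with the same choices \<open>J\<close> only in the entry
  \<open>(i + m, J i)\<close>, so an algorithm telling them apart must read that entry of the YES matrix,
  and success probability \<open>2/3\<close> forces this for a third of all pairs \<open>(J, i)\<close>.
  Fixing \<open>i\<close> and the other choices and letting \<open>j = J i\<close> range over \<open>[q]\<close>, the YES matrices
  differ only in rows \<open>i, i + m\<close> of column \<open>j\<close>: locating the entry is a search for a hidden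
  column. An algorithm that succeeds for \<open>n\<close> values of \<open>j\<close> therefore makes at least
  \<open>n (n + 1)/2\<close> queries in these two rows, summed over \<open>j\<close>. Averaging with
  \<open>n\<^sup>2/2 \<ge> q n/3 - q\<^sup>2/18\<close> over all \<open>J\<close> and \<open>i\<close> gives \<open>s \<ge> p q/36\<close>.\<close>

lemma sum_PiE_fun_upd:
  assumes "i \<in> I"
  shows "(\<Sum>J\<in>PiE I B. g J) = (\<Sum>J\<in>PiE (I - {i}) B. \<Sum>a\<in>B i. g (J(i := a)))"
proof -
  have PiE_eq: "PiE I B = (\<lambda>(a, J). J(i := a)) ` (B i \<times> PiE (I - {i}) B)"
    using PiE_insert_eq[of i "I - {i}" B] assms by (simp add: insert_absorb)
  have "inj_on (\<lambda>(a, J). J(i := a)) (B i \<times> PiE (I - {i}) B)"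
    using inj_combinator[of i "I - {i}" B] by simp
  then have "(\<Sum>J\<in>PiE I B. g J) = (\<Sum>(a, J)\<in>B i \<times> PiE (I - {i}) B. g (J(i := a)))"
    unfolding PiE_eq by (simp add: sum.reindex split_def)
  also have "\<dots> = (\<Sum>J\<in>PiE (I - {i}) B. \<Sum>a\<in>B i. g (J(i := a)))"
    by (simp add: sum.cartesian_product[symmetric] sum.swap[of _ "B i"])
  finally show ?thesis .
qed

lemma card_filter_product:
  assumes "finite A" "finite B"
  shows "card {(a, b) \<in> A \<times> B. P a b} = (\<Sum>b\<in>B. card {a \<in> A. P a b})"
proof -
  have "{(a, b) \<in> A \<times> B. P a b} = (\<Union>b\<in>B. (\<lambda>a. (a, b)) ` {a \<in> A. P a b})"
    by auto
  also have "card \<dots> = (\<Sum>b\<in>B. card ((\<lambda>a. (a, b)) ` {a \<in> A. P a b}))"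
    using assms by (intro card_UN_disjoint) auto
  also have "\<dots> = (\<Sum>b\<in>B. card {a \<in> A. P a b})"
    by (intro sum.cong refl card_image) (auto intro: inj_onI)
  finally show ?thesis .
qed

lemma half_square_ge_linear: "(c::real) * x - c\<^sup>2 / 2 \<le> x\<^sup>2 / 2"
proof -
  have "0 \<le> (x - c)\<^sup>2" by simp
  then show ?thesis by (simp add: power2_eq_square algebra_simps)
qed

lemma finite_queried: "finite (queried T A)"
  by (induction T) auto

lemma queried_meets_if_run_differs:
  assumes "\<And>i k. (i, k) \<notin> P \<Longrightarrow> A i k = B i k" and "run T A \<noteq> run T B"
  shows "queried T A \<inter> P \<noteq> {}"
  using assms(2)
proof (induction T)
  case (Query i k f)
  then show ?case
    using assms(1)[of i k] by (cases "(i, k) \<in> P") auto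
qed simp

definition hides_columns ::
    "(nat \<Rightarrow> nat \<Rightarrow> nat \<Rightarrow> real) \<Rightarrow> (nat \<Rightarrow> nat \<Rightarrow> real) \<Rightarrow> nat set \<Rightarrow> nat set \<Rightarrow> bool" where
  "hides_columns M M0 R S \<longleftrightarrow> (\<forall>j\<in>S. \<forall>i k. (i, k) \<notin> R \<times> {j} \<longrightarrow> M j i k = M0 i k)"

definition found_columns ::
    "qtree \<Rightarrow> (nat \<Rightarrow> nat \<Rightarrow> nat \<Rightarrow> real) \<Rightarrow> nat set \<Rightarrow> nat set \<Rightarrow> nat set" where
  "found_columns T M R S = {j \<in> S. queried T (M j) \<inter> (R \<times> {j}) \<noteq> {}}"

definition block_queries ::
    "qtree \<Rightarrow> (nat \<Rightarrow> nat \<Rightarrow> nat \<Rightarrow> real) \<Rightarrow> nat set \<Rightarrow> nat set \<Rightarrow> nat" where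
  "block_queries T M R S = (\<Sum>j\<in>S. card (queried T (M j) \<inter> (R \<times> S)))"

lemma found_columns_subset: "found_columns T M R S \<subseteq> S"
  by (auto simp: found_columns_def)

lemma hides_columns_mono: "hides_columns M M0 R S \<Longrightarrow> S' \<subseteq> S \<Longrightarrow> hides_columns M M0 R S'"
  by (auto simp: hides_columns_def)

lemma hides_columns_entry:
  "hides_columns M M0 R S \<Longrightarrow> j \<in> S \<Longrightarrow> (i, k) \<notin> R \<times> {j} \<Longrightarrow> M j i k = M0 i k"
  unfolding hides_columns_def by blast

lemma queried_Query_hidden:
  assumes "hides_columns M M0 R S" "j \<in> S" "(r, k) \<notin> R \<times> {j}"
  shows "queried (Query r k f) (M j) = insert (r, k) (queried (f (M0 r k)) (M j))"
  using hides_columns_entry[OF assms] by simp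

lemma hides_columns_Query_outside:
  assumes "hides_columns M M0 R S" "(r, k) \<notin> R \<times> S"
  shows "found_columns (Query r k f) M R S = found_columns (f (M0 r k)) M R S"
    and "block_queries (Query r k f) M R S = block_queries (f (M0 r k)) M R S"
proof -
  have eq: "queried (Query r k f) (M j) \<inter> (R \<times> X) = queried (f (M0 r k)) (M j) \<inter> (R \<times> X)"
    if "j \<in> S" "X \<subseteq> S" for j X
  proof -
    have "(r, k) \<notin> R \<times> {j}" using assms(2) that(1) by blast
    note step = queried_Query_hidden[OF assms(1) that(1) this]
    have "(r, k) \<notin> R \<times> X" using assms(2) that(2) by blast
    then show ?thesis unfolding step by blast
  qed
  have "queried (Query r k f) (M j) \<inter> (R \<times> {j}) = queried (f (M0 r k)) (M j) \<inter> (R \<times> {j})"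
    if "j \<in> S" for j
    using that by (intro eq) auto
  then show "found_columns (Query r k f) M R S = found_columns (f (M0 r k)) M R S"
    unfolding found_columns_def by (intro Collect_cong) blast
  show "block_queries (Query r k f) M R S = block_queries (f (M0 r k)) M R S"
    unfolding block_queries_def using eq by (intro sum.cong) auto
qed

lemma found_columns_Query_inside:
  assumes "hides_columns M M0 R S"
  shows "found_columns (Query r k f) M R S \<subseteq> insert k (found_columns (f (M0 r k)) M R (S - {k}))"
proof
  fix j assume j: "j \<in> found_columns (Query r k f) M R S"
  show "j \<in> insert k (found_columns (f (M0 r k)) M R (S - {k}))"
  proof (cases "j = k")
    case False
    with j have jS: "j \<in> S - {k}" using found_columns_subset by blast
    have rk: "(r, k) \<notin> R \<times> {j}" using False by blast
    have "queried (Query r k f) (M j) \<inter> (R \<times> {j}) \<noteq> {}"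
      using j unfolding found_columns_def by blast
    then have "queried (f (M0 r k)) (M j) \<inter> (R \<times> {j}) \<noteq> {}"
      unfolding queried_Query_hidden[OF assms DiffD1[OF jS] rk] using rk by blast
    with jS show ?thesis by (simp add: found_columns_def)
  qed simp
qed

lemma block_queries_Query_inside:
  assumes "finite S" "hides_columns M M0 R S" "(r, k) \<in> R \<times> S"
  shows "1 + card (S - {k}) + block_queries (f (M0 r k)) M R (S - {k})
           \<le> block_queries (Query r k f) M R S"
proof -
  let ?Q = "\<lambda>j. queried (Query r k f) (M j) \<inter> (R \<times> S)"
  have one_more: "Suc (card (queried (f (M0 r k)) (M j) \<inter> (R \<times> (S - {k})))) \<le> card (?Q j)"
    if "j \<in> S - {k}" for j
  proof -
    have rk: "(r, k) \<notin> R \<times> {j}" using that by blast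
    have "insert (r, k) (queried (f (M0 r k)) (M j) \<inter> (R \<times> (S - {k}))) \<subseteq> ?Q j"
      unfolding queried_Query_hidden[OF assms(2) DiffD1[OF that] rk] using assms(3) by blast
    then have "card (insert (r, k) (queried (f (M0 r k)) (M j) \<inter> (R \<times> (S - {k}))))
                 \<le> card (?Q j)"
      by (rule card_mono[rotated]) (simp add: finite_queried)
    then show ?thesis by (simp add: finite_queried)
  qed
  have "0 < card (?Q k)"
    by (rule card_gt_0_iff[THEN iffD2]) (use assms(3) finite_queried in auto)
  moreover have "(\<Sum>j\<in>S - {k}. Suc (card (queried (f (M0 r k)) (M j) \<inter> (R \<times> (S - {k})))))
                   \<le> (\<Sum>j\<in>S - {k}. card (?Q j))"
    using one_more by (rule sum_mono)
  moreover have "block_queries (Query r k f) M R S = card (?Q k) + (\<Sum>j\<in>S - {k}. card (?Q j))"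
    unfolding block_queries_def by (rule sum.remove) (use assms(1,3) in auto)
  moreover have "(\<Sum>j\<in>S - {k}. Suc (card (queried (f (M0 r k)) (M j) \<inter> (R \<times> (S - {k})))))
                   = card (S - {k}) + block_queries (f (M0 r k)) M R (S - {k})"
    by (simp add: block_queries_def sum_Suc)
  ultimately show ?thesis by linarith
qed

text \<open>A query at a block position \<open>(r, k)\<close> can only find column \<open>k\<close>: all other candidates
  receive the answer of \<open>M0\<close> and continue along the same path, each of them paying for the query.\<close>

lemma card_found_columns_le:
  assumes "finite S" "hides_columns M M0 R S"
  shows "card (found_columns T M R S) * (card (found_columns T M R S) + 1) \<le> 2 * block_queries T M R S"
  using assms
proof (induction T arbitrary: S)
  case (Leaf b)
  then show ?case by (simp add: found_columns_def)
next
  case (Query r k f)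
  let ?v = "M0 r k"
  show ?case
  proof (cases "(r, k) \<in> R \<times> S")
    case True
    let ?S' = "S - {k}"
    let ?h = "card (found_columns (Query r k f) M R S)"
    let ?h' = "card (found_columns (f ?v) M R ?S')"
    have IH: "?h' * (?h' + 1) \<le> 2 * block_queries (f ?v) M R ?S'"
      by (rule Query.IH[OF rangeI]) (use Query.prems hides_columns_mono in auto)
    have fin': "finite (found_columns (f ?v) M R ?S')"
      using Query.prems(1) by (simp add: found_columns_def)
    have "?h \<le> card (insert k (found_columns (f ?v) M R ?S'))"
      using found_columns_Query_inside[OF Query.prems(2)] fin' by (intro card_mono) auto
    then have "?h \<le> ?h' + 1"
      using fin' by (simp add: card_insert_if split: if_splits)
    then have "?h * (?h + 1) \<le> (?h' + 1) * (?h' + 2)"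
      by (intro mult_le_mono) auto
    moreover have "?h' \<le> card ?S'"
      using Query.prems(1) by (intro card_mono) (auto simp: found_columns_def)
    moreover have "(?h' + 1) * (?h' + 2) = ?h' * (?h' + 1) + 2 * ?h' + 2"
      by (simp add: algebra_simps)
    ultimately show ?thesis
      using IH block_queries_Query_inside[OF Query.prems True, of f] by linarith
  next
    case False
    then show ?thesis
      using Query.IH[OF rangeI Query.prems] hides_columns_Query_outside[OF Query.prems(2) False] by simp
  qed
qed

context
  fixes T :: qtree and m q :: nat and W :: real
begin

definition reads_flip :: "(nat \<Rightarrow> nat) \<Rightarrow> nat \<Rightarrow> bool" where
  "reads_flip J i \<longleftrightarrow> (i + m, J i) \<in> queried T (yes_mat m q W J)"

definition pair_queries :: "(nat \<Rightarrow> nat) \<Rightarrow> nat \<Rightarrow> nat" where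
  "pair_queries J i = card (queried T (yes_mat m q W J) \<inter> ({i, i + m} \<times> {0..<q}))"

lemma reads_flip_if_distinguishes:
  assumes "run T (yes_mat m q W J) \<noteq> run T (no_mat m q W J i)"
  shows "reads_flip J i"
proof -
  have "yes_mat m q W J r k = no_mat m q W J i r k" if "(r, k) \<notin> {(i + m, J i)}" for r k
    using that by (auto simp: no_mat_def)
  from queried_meets_if_run_differs[of "{(i + m, J i)}", OF this assms] show ?thesis
    by (simp add: reads_flip_def)
qed

lemma sum_pair_queries_le: "(\<Sum>i\<in>{0..<m}. pair_queries J i) \<le> card (queried T (yes_mat m q W J))"
proof -
  let ?Q = "queried T (yes_mat m q W J)"
  have "(\<Sum>i\<in>{0..<m}. pair_queries J i) = card (\<Union>i\<in>{0..<m}. ?Q \<inter> ({i, i + m} \<times> {0..<q}))"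
    unfolding pair_queries_def by (rule card_UN_disjoint[symmetric]) (auto simp: finite_queried)
  also have "\<dots> \<le> card ?Q"
    by (intro card_mono finite_queried) auto
  finally show ?thesis .
qed

lemma yes_mat_hides_columns:
  assumes "i < m"
  shows "hides_columns (\<lambda>j. yes_mat m q W (J(i := j)))
           (\<lambda>r k. if r \<in> {i, i + m} \<and> k < q then coef_b q W else yes_mat m q W J r k)
           {i, i + m} {0..<q}"
  unfolding hides_columns_def
proof (intro ballI allI impI)
  fix j r k :: nat assume "(r, k) \<notin> {i, i + m} \<times> {j}"
  moreover have "r mod m = i \<longleftrightarrow> r = i \<or> r = i + m" if "r < 2 * m"
    using assms that by (metis le_add_diff_inverse2 mod_add_self2 mod_less mod_less_eq_dividend
        add_diff_inverse_nat mult_2 nat_add_left_cancel_less not_less le_mod_geq)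
  ultimately show "yes_mat m q W (J(i := j)) r k
      = (if r \<in> {i, i + m} \<and> k < q then coef_b q W else yes_mat m q W J r k)"
    using assms by (auto simp: yes_mat_def row_vec_def)
qed

lemma card_reads_flip_fiber_le:
  fixes J :: "nat \<Rightarrow> nat"
  assumes "i < m"
  defines "n \<equiv> card {j \<in> {0..<q}. reads_flip (J(i := j)) i}"
  shows "n * (n + 1) \<le> 2 * (\<Sum>j\<in>{0..<q}. pair_queries (J(i := j)) i)"
proof -
  let ?M = "\<lambda>j. yes_mat m q W (J(i := j))"
  let ?F = "found_columns T ?M {i, i + m} {0..<q}"
  have "n \<le> card ?F"
    unfolding n_def found_columns_def reads_flip_def by (intro card_mono) auto
  then have "n * (n + 1) \<le> card ?F * (card ?F + 1)"
    by (intro mult_le_mono) auto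
  also have "\<dots> \<le> 2 * block_queries T ?M {i, i + m} {0..<q}"
    using card_found_columns_le[OF _ yes_mat_hides_columns[OF assms(1)]] by simp
  also have "block_queries T ?M {i, i + m} {0..<q} = (\<Sum>j\<in>{0..<q}. pair_queries (J(i := j)) i)"
    by (simp add: block_queries_def pair_queries_def)
  finally show ?thesis .
qed

lemma sum_pair_queries_fiber_ge:
  assumes "i < m"
  shows "real q / 3 * card {j \<in> {0..<q}. reads_flip (J(i := j)) i} - (real q)\<^sup>2 / 18
           \<le> (\<Sum>j\<in>{0..<q}. real (pair_queries (J(i := j)) i))"
proof -
  define n where "n = card {j \<in> {0..<q}. reads_flip (J(i := j)) i}"
  have "real q / 3 * n - (real q)\<^sup>2 / 18 = real q / 3 * n - (real q / 3)\<^sup>2 / 2"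
    by (simp add: power2_eq_square)
  also have "\<dots> \<le> (real n)\<^sup>2 / 2"
    by (rule half_square_ge_linear)
  also have "\<dots> \<le> real (n * (n + 1)) / 2"
    by (simp add: power2_eq_square algebra_simps)
  also have "\<dots> \<le> (\<Sum>j\<in>{0..<q}. real (pair_queries (J(i := j)) i))"
  proof -
    have "real (n * (n + 1)) \<le> real (2 * (\<Sum>j\<in>{0..<q}. pair_queries (J(i := j)) i))"
      using card_reads_flip_fiber_le[OF assms, of J] unfolding n_def by (rule of_nat_mono)
    then show ?thesis by simp
  qed
  finally show ?thesis by (simp add: n_def)
qed

lemma sum_pair_queries_ge:
  assumes "i < m"
  shows "real q / 3 * card {J \<in> choices m q. reads_flip J i} - real (card (choices m q)) * q / 18
           \<le> (\<Sum>J\<in>choices m q. real (pair_queries J i))"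
proof -
  let ?C' = "PiE ({0..<m} - {i}) (\<lambda>_. {0..<q})"
  let ?n = "\<lambda>J. real (card {j \<in> {0..<q}. reads_flip (J(i := j)) i})"
  have split: "(\<Sum>J\<in>choices m q. g J) = (\<Sum>J\<in>?C'. \<Sum>j\<in>{0..<q}. g (J(i := j)))"
    for g :: "(nat \<Rightarrow> nat) \<Rightarrow> real"
    unfolding choices_def using assms by (intro sum_PiE_fun_upd) auto
  have "real (card (choices m q)) = (\<Sum>J\<in>choices m q. 1)"
    by simp
  also have "\<dots> = real (card ?C') * q"
    unfolding split by simp
  finally have card_choices: "real (card (choices m q)) = real (card ?C') * q" .
  have "real (card {J \<in> choices m q. reads_flip J i}) = (\<Sum>J\<in>choices m q. of_bool (reads_flip J i))"
    by (simp add: choices_def finite_PiE Int_def)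
  also have "\<dots> = (\<Sum>J\<in>?C'. ?n J)"
    unfolding split by (simp add: Int_def)
  finally have card_flip: "real (card {J \<in> choices m q. reads_flip J i}) = (\<Sum>J\<in>?C'. ?n J)" .
  have "real q / 3 * (\<Sum>J\<in>?C'. ?n J) - real (card ?C') * (real q)\<^sup>2 / 18
      = (\<Sum>J\<in>?C'. real q / 3 * ?n J - (real q)\<^sup>2 / 18)"
    by (simp add: sum_subtractf sum_distrib_left)
  also have "\<dots> \<le> (\<Sum>J\<in>choices m q. real (pair_queries J i))"
    unfolding split by (intro sum_mono sum_pair_queries_fiber_ge assms)
  finally show ?thesis
    unfolding card_flip card_choices by (simp add: power2_eq_square)
qed

lemma card_correct_no_le:
  "card {(J, i) \<in> choices m q \<times> {0..<m}. \<not> run T (no_mat m q W J i)}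
     \<le> (card (choices m q) - card {J \<in> choices m q. run T (yes_mat m q W J)}) * m
       + card {(J, i) \<in> choices m q \<times> {0..<m}. run T (yes_mat m q W J) \<noteq> run T (no_mat m q W J i)}"
  (is "card ?N \<le> (card ?C - card ?Y) * m + card ?D")
proof -
  let ?I = "{0..<m}"
  have fin: "finite ?C" by (simp add: choices_def finite_PiE)
  have "?N \<subseteq> (?C - ?Y) \<times> ?I \<union> ?D" by auto
  moreover have "finite ((?C - ?Y) \<times> ?I \<union> ?D)"
    by (rule finite_subset[of _ "?C \<times> ?I"]) (use fin in auto)
  ultimately have "card ?N \<le> card ((?C - ?Y) \<times> ?I \<union> ?D)"
    by (rule card_mono[rotated])
  also have "\<dots> \<le> card ((?C - ?Y) \<times> ?I) + card ?D"
    by (rule card_Un_le)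
  also have "\<dots> = (card ?C - card ?Y) * m + card ?D"
    using fin by (simp add: card_cartesian_product card_Diff_subset)
  finally show ?thesis .
qed

lemma card_distinguishing_ge:
  assumes "m \<ge> 1" "q \<ge> 1" "success_prob T m q W \<ge> 2/3"
  shows "real (card (choices m q)) * m / 3
           \<le> card {(J, i) \<in> choices m q \<times> {0..<m}. run T (yes_mat m q W J) \<noteq> run T (no_mat m q W J i)}"
    (is "_ \<le> real (card ?D)")
proof -
  let ?C = "choices m q" and ?I = "{0..<m}"
  let ?Y = "{J \<in> ?C. run T (yes_mat m q W J)}"
  let ?N = "{(J, i) \<in> ?C \<times> ?I. \<not> run T (no_mat m q W J i)}"
  have C_pos: "real (card ?C) > 0" using assms(2) by (simp add: choices_def card_PiE)
  have m_pos: "real m > 0" using assms(1) by simp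
  have Y_le: "card ?Y \<le> card ?C" by (intro card_mono) (auto simp: choices_def finite_PiE)
  have "real (card ?N) \<le> real ((card ?C - card ?Y) * m + card ?D)"
    using card_correct_no_le by (rule of_nat_mono)
  also have "\<dots> = (real (card ?C) - card ?Y) * m + card ?D"
    using Y_le by (simp add: of_nat_diff)
  finally have "card ?N / (card ?C * m) \<le> ((real (card ?C) - card ?Y) * m + card ?D) / (card ?C * m)"
    using C_pos m_pos by (intro divide_right_mono) auto
  moreover have "success_prob T m q W = 1/2 * (card ?Y / card ?C) + 1/2 * (card ?N / (card ?C * m))"
    unfolding success_prob_def by (simp add: card_cartesian_product)
  moreover have "1/2 * (card ?Y / card ?C)
      + 1/2 * (((real (card ?C) - card ?Y) * m + card ?D) / (card ?C * m))
      = 1/2 + card ?D / (2 * card ?C * m)"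
    using C_pos m_pos by (simp add: field_simps)
  ultimately have "1/6 \<le> card ?D / (2 * card ?C * m)"
    using assms(3) by linarith
  then show ?thesis
    using C_pos m_pos by (simp add: field_simps)
qed

lemma query_count_ge:
  assumes "m \<ge> 1" "q \<ge> 1" "\<forall>A. card (queried T A) \<le> s" "success_prob T m q W \<ge> 2/3"
  shows "real m * q / 18 \<le> s"
proof -
  let ?C = "choices m q" and ?I = "{0..<m}"
  let ?F = "\<lambda>i. real (card {J \<in> ?C. reads_flip J i})"
  have fin: "finite ?C" by (simp add: choices_def finite_PiE)
  have C_pos: "real (card ?C) > 0" using assms(2) by (simp add: choices_def card_PiE)
  have "card {(J, i) \<in> ?C \<times> ?I. run T (yes_mat m q W J) \<noteq> run T (no_mat m q W J i)}
          \<le> card {(J, i) \<in> ?C \<times> ?I. reads_flip J i}"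
    by (rule card_mono[OF finite_subset[of _ "?C \<times> ?I"]]) (use fin reads_flip_if_distinguishes in auto)
  then have "real (card ?C) * m / 3 \<le> card {(J, i) \<in> ?C \<times> ?I. reads_flip J i}"
    using card_distinguishing_ge[OF assms(1,2,4)] of_nat_mono by fastforce
  also have "\<dots> = (\<Sum>i\<in>?I. ?F i)"
    unfolding card_filter_product[OF fin finite_atLeastLessThan] by simp
  finally have flips: "real (card ?C) * m / 3 \<le> (\<Sum>i\<in>?I. ?F i)" .
  have "real q / 3 * (\<Sum>i\<in>?I. ?F i) - real m * (real (card ?C) * q / 18)
      = (\<Sum>i\<in>?I. real q / 3 * ?F i - real (card ?C) * q / 18)"
    by (simp add: sum_subtractf sum_distrib_left)
  also have "\<dots> \<le> (\<Sum>i\<in>?I. \<Sum>J\<in>?C. real (pair_queries J i))"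
    by (intro sum_mono sum_pair_queries_ge) auto
  also have "\<dots> = (\<Sum>J\<in>?C. real (\<Sum>i\<in>?I. pair_queries J i))"
    by (simp add: sum.swap[of _ ?I])
  also have "\<dots> \<le> (\<Sum>J\<in>?C. real s)"
    using sum_pair_queries_le assms(3) by (intro sum_mono) (meson le_trans of_nat_le_iff)
  finally have "real q / 3 * (\<Sum>i\<in>?I. ?F i) - real m * (real (card ?C) * q / 18) \<le> real (card ?C) * s"
    by simp
  moreover have "real q / 3 * (real (card ?C) * m / 3) \<le> real q / 3 * (\<Sum>i\<in>?I. ?F i)"
    using flips by (intro mult_left_mono) auto
  ultimately have "real (card ?C) * (real m * q / 18) \<le> real (card ?C) * s"
    by (simp add: algebra_simps)
  with C_pos show ?thesis by simp
qed

end

theorem mainTheorem12: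
  "\<exists>c > (0::real). \<forall>(p::nat) (q::nat) (W::real) (T::qtree) (s::nat).
     even p \<and> q \<ge> 1 \<and> W \<ge> real q
     \<and> (\<forall>A. card (queried T A) \<le> s)
     \<and> success_prob T (p div 2) q W \<ge> 2/3
     \<longrightarrow> real s \<ge> c * real p * real q"
proof (intro exI[of _ "1/36"] conjI allI impI)
  fix p q :: nat and W :: real and T :: qtree and s :: nat
  assume h: "even p \<and> q \<ge> 1 \<and> W \<ge> real q \<and> (\<forall>A. card (queried T A) \<le> s)
    \<and> success_prob T (p div 2) q W \<ge> 2/3"
  show "1/36 * real p * real q \<le> real s"
  proof (cases "p = 0")
    case False
    with h have "real (p div 2) * q / 18 \<le> s"
      by (intro query_count_ge) auto
    moreover have "real p = 2 * real (p div 2)"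
      using h by (simp add: real_of_nat_div)
    ultimately show ?thesis by simp
  qed simp
qed simp

end
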